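(* Let $k>0$, $r\ge0$, and let $V_1,\dots,V_r\le\mathbb{Z}^k$ be subgroups of infinite index. Then there exists $x\in\mathbb{Z}^k$ such that $nx\notin\bigcup_{j=1}^rV_j$ for every integer $n>0$. *)

theory Defs
  imports "HOL-Analysis.Analysis"
begin

definition add_subgroup :: "'a::ab_group_add set \<Rightarrow> bool" where
  "add_subgroup V \<longleftrightarrow> 0 \<in> V \<and> (\<forall>x\<in>V. \<forall>y\<in>V. x + y \<in> V) \<and> (\<forall>x\<in>V. - x \<in> V)"

definition infinite_index :: "'a::ab_group_add set \<Rightarrow> bool" where
  "infinite_index V \<longleftrightarrow> infinite ((\<lambda>x. (\<lambda>v. x + v) ` V) ` UNIV)"

end

theory Submission
  imports Defs
begin

text \<open>A subgroup \<open>V\<close> of \<open>\<int>\<^sup>k\<close> whose rational span is all of \<open>\<rat>\<^sup>k\<close> contains a nonzero multiple of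
  every standard basis vector, and then has finite index. So each \<open>V\<^sub>j\<close> spans a proper subspace
  \<open>S\<^sub>j\<close> of \<open>\<rat>\<^sup>k\<close>. A vector space over an infinite field is not a finite union of proper
  subspaces, and clearing denominators yields an integral \<open>x\<close> outside every \<open>S\<^sub>j\<close>. Since \<open>S\<^sub>j\<close> is
  closed under division by \<open>n \<noteq> 0\<close>, no \<open>n x\<close> lies in \<open>V\<^sub>j\<close>.\<close>

lemma (in vector_space) subspace_scale_iff:
  assumes "subspace S" "c \<noteq> 0"
  shows "scale c x \<in> S \<longleftrightarrow> x \<in> S"
  using assms by (metis subspace_scale scale_scale scale_one left_inverse)

lemma (in vector_space) line_meets_subspace_at_most_once:
  assumes S: "subspace S" and "x \<notin> S" "x + scale a y \<in> S" "x + scale b y \<in> S"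
  shows "a = b"
proof (rule ccontr)
  assume "a \<noteq> b"
  have "scale (a - b) y \<in> S"
    using subspace_diff[OF S assms(3,4)] by (simp add: scale_left_diff_distrib)
  with \<open>a \<noteq> b\<close> have "y \<in> S"
    by (simp add: subspace_scale_iff[OF S])
  then have "x + scale a y - scale a y \<in> S"
    by (intro subspace_diff[OF S assms(3)] subspace_scale[OF S])
  then have "x \<in> S"
    by simp
  with \<open>x \<notin> S\<close> show False ..
qed

lemma (in vector_space) ex_not_in_finite_proper_subspaces:
  assumes "infinite (UNIV :: 'a set)" "finite \<S>"
    and "\<And>S. S \<in> \<S> \<Longrightarrow> subspace S" "\<And>S. S \<in> \<S> \<Longrightarrow> S \<noteq> UNIV"
  shows "\<exists>x. \<forall>S\<in>\<S>. x \<notin> S"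
  using assms(2-)
proof (induction \<S> rule: finite_induct)
  case (insert S \<S>)
  then have S: "subspace S" "S \<noteq> UNIV" and subspaces: "\<And>T. T \<in> \<S> \<Longrightarrow> subspace T"
    by simp_all
  from insert obtain x where x: "\<And>T. T \<in> \<S> \<Longrightarrow> x \<notin> T"
    by auto
  show ?case
  proof (cases "x \<in> S")
    case False
    with x show ?thesis by auto
  next
    case True
    obtain y where "y \<notin> S"
      using S(2) by auto
    have "finite {a. x + scale a y \<in> T}" if "T \<in> \<S>" for T
    proof (cases "{a. x + scale a y \<in> T} = {}")
      case False
      then obtain a0 where "x + scale a0 y \<in> T"
        by blast
      then have "{a. x + scale a y \<in> T} \<subseteq> {a0}"
        using line_meets_subspace_at_most_once[OF subspaces x] that by blast
      then show ?thesis
        by (rule finite_subset) simp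
    qed simp
    with insert.hyps(1) have "finite (insert 0 (\<Union>T\<in>\<S>. {a. x + scale a y \<in> T}))"
      by (intro finite.insertI finite_UN_I)
    then obtain a where a: "a \<notin> insert 0 (\<Union>T\<in>\<S>. {a. x + scale a y \<in> T})"
      using ex_new_if_finite[OF assms(1)] by meson
    have "x + scale a y \<notin> S"
    proof
      assume "x + scale a y \<in> S"
      from subspace_diff[OF S(1) this True] have "scale a y \<in> S"
        by simp
      with a \<open>y \<notin> S\<close> show False
        by (simp add: subspace_scale_iff[OF S(1)])
    qed
    with a show ?thesis
      by blast
  qed
qed simp

definition of_int_vec :: "int ^ 'n \<Rightarrow> 'a::ring_1 ^ 'n" where
  "of_int_vec x = (\<chi> i. of_int (x $ i))"

lemma of_int_vec_0 [simp]: "of_int_vec 0 = 0"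
  and of_int_vec_add: "of_int_vec (x + y) = of_int_vec x + of_int_vec y"
  and of_int_vec_smult: "of_int_vec (n *s x) = of_int n *s of_int_vec x"
  and of_int_vec_axis: "of_int_vec (axis i 1) = axis i 1"
  by (simp_all add: of_int_vec_def vec_eq_iff axis_def)

lemma of_int_vec_eq_iff [simp]:
  "(of_int_vec x :: 'a::ring_char_0 ^ 'n) = of_int_vec y \<longleftrightarrow> x = y"
  by (simp add: of_int_vec_def vec_eq_iff)

lemma add_subgroup_0: "add_subgroup V \<Longrightarrow> 0 \<in> V"
  and add_subgroup_add: "add_subgroup V \<Longrightarrow> x \<in> V \<Longrightarrow> y \<in> V \<Longrightarrow> x + y \<in> V"
  and add_subgroup_uminus: "add_subgroup V \<Longrightarrow> x \<in> V \<Longrightarrow> - x \<in> V"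
  by (simp_all add: add_subgroup_def)

lemma add_subgroup_sum:
  assumes "add_subgroup V" "\<And>a. a \<in> A \<Longrightarrow> f a \<in> V"
  shows "sum f A \<in> V"
  using assms(2)
  by (induction A rule: infinite_finite_induct)
    (simp_all add: add_subgroup_0 add_subgroup_add assms(1))

lemma add_subgroup_int_smult:
  fixes x :: "'a::ring_1 ^ 'n"
  assumes V: "add_subgroup V" and "x \<in> V"
  shows "of_int n *s x \<in> V"
proof (induction n rule: int_induct[where k = 0])
  case base
  show ?case
    using add_subgroup_0[OF V] by simp
next
  case (step1 n)
  show ?case
    using add_subgroup_add[OF V step1.IH \<open>x \<in> V\<close>] by simp
next
  case (step2 n)
  show ?case
    using add_subgroup_add[OF V step2.IH add_subgroup_uminus[OF V \<open>x \<in> V\<close>]] by simp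
qed

lemma add_subgroup_coset_eq:
  assumes V: "add_subgroup V" and "x - y \<in> V"
  shows "(+) x ` V = (+) y ` V"
proof -
  have "(+) a ` V \<subseteq> (+) b ` V" if "a - b \<in> V" for a b
  proof
    fix w
    assume "w \<in> (+) a ` V"
    then obtain v where "v \<in> V" "w = b + ((a - b) + v)"
      by auto
    then show "w \<in> (+) b ` V"
      using add_subgroup_add[OF V \<open>a - b \<in> V\<close>] by blast
  qed
  moreover have "y - x \<in> V"
    using add_subgroup_uminus[OF V \<open>x - y \<in> V\<close>] by simp
  ultimately show ?thesis
    using \<open>x - y \<in> V\<close> by blast
qed

lemma finite_index_if_axis_multiples:
  fixes V :: "(int ^ 'n) set"
  assumes V: "add_subgroup V" and D: "\<And>i. D i > 0" "\<And>i. D i *s axis i 1 \<in> V"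
  shows "\<not> infinite_index V"
proof -
  define R where "R = (\<lambda>f. \<chi> i. f i) ` (\<Pi>\<^sub>E i\<in>UNIV. {0..<D i})"
  have "finite R"
    unfolding R_def by (intro finite_imageI finite_PiE) simp_all
  have representative: "\<exists>y\<in>R. x - y \<in> V" for x
  proof
    show "(\<chi> i. x $ i mod D i) \<in> R"
      unfolding R_def using D(1) by (auto simp: PiE_iff)
    have "x - (\<chi> i. x $ i mod D i) = (\<Sum>i\<in>UNIV. (x $ i div D i) *s (D i *s axis i 1))"
      by (subst basis_expansion[symmetric, of "x - (\<chi> i. x $ i mod D i)"])
        (simp add: minus_mod_eq_div_mult)
    also have "\<dots> \<in> V"
      using add_subgroup_int_smult[OF V D(2)] by (simp add: add_subgroup_sum[OF V])
    finally show "x - (\<chi> i. x $ i mod D i) \<in> V" .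
  qed
  have "(\<lambda>x. (+) x ` V) ` UNIV \<subseteq> (\<lambda>y. (+) y ` V) ` R"
  proof (rule image_subsetI)
    fix x
    from representative obtain y where "y \<in> R" "x - y \<in> V"
      by blast
    then show "(+) x ` V \<in> (\<lambda>y. (+) y ` V) ` R"
      by (simp add: add_subgroup_coset_eq[OF V])
  qed
  with \<open>finite R\<close> show ?thesis
    unfolding infinite_index_def by (meson finite_imageI finite_subset)
qed

lemma span_of_int_vec_imp_int_multiple:
  fixes V :: "(int ^ 'n) set" and q :: "rat ^ 'n"
  assumes V: "add_subgroup V" and q: "q \<in> vec.span (of_int_vec ` V)"
  shows "\<exists>D>0. \<exists>v\<in>V. of_int_vec v = of_int D *s q"
proof -
  define M where "M = {q :: rat ^ 'n. \<exists>D>0. \<exists>v\<in>V. of_int_vec v = of_int D *s q}"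
  have "vec.subspace M"
  proof (rule vec.subspaceI)
    have "of_int_vec 0 = of_int 1 *s (0 :: rat ^ 'n)"
      by simp
    then show "0 \<in> M"
      unfolding M_def using add_subgroup_0[OF V] zero_less_one by blast
  next
    fix p q
    assume "p \<in> M" "q \<in> M"
    then obtain D E v w where "D > 0" "v \<in> V" "of_int_vec v = of_int D *s p"
      and "E > 0" "w \<in> V" "of_int_vec w = of_int E *s q"
      unfolding M_def by blast
    then have "of_int_vec (E *s v + D *s w) = of_int (D * E) *s (p + q)"
      by (simp add: of_int_vec_add of_int_vec_smult vec_eq_iff algebra_simps)
    moreover have "E *s v + D *s w \<in> V"
      using add_subgroup_int_smult[OF V \<open>v \<in> V\<close>, of E] add_subgroup_int_smult[OF V \<open>w \<in> V\<close>, of D]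
      by (simp add: add_subgroup_add[OF V])
    moreover have "D * E > 0"
      using \<open>D > 0\<close> \<open>E > 0\<close> by simp
    ultimately show "p + q \<in> M"
      unfolding M_def by blast
  next
    fix c p
    assume "p \<in> M"
    then obtain D v where "D > 0" "v \<in> V" "of_int_vec v = of_int D *s p"
      unfolding M_def by blast
    obtain a b where "quotient_of c = (a, b)"
      by (cases "quotient_of c")
    then have "b > 0" "c = of_int a / of_int b"
      by (simp_all add: quotient_of_denom_pos quotient_of_div)
    have "of_int_vec (a *s v) = of_int (b * D) *s (c *s p)"
      using \<open>b > 0\<close> \<open>of_int_vec v = of_int D *s p\<close>
      by (simp add: \<open>c = _\<close> of_int_vec_smult vector_smult_assoc)
    moreover have "a *s v \<in> V"
      using add_subgroup_int_smult[OF V \<open>v \<in> V\<close>] by simp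
    moreover have "b * D > 0"
      using \<open>b > 0\<close> \<open>D > 0\<close> by simp
    ultimately show "c *s p \<in> M"
      unfolding M_def by blast
  qed
  moreover have "of_int_vec ` V \<subseteq> M"
  proof
    fix p :: "rat ^ 'n"
    assume "p \<in> of_int_vec ` V"
    then obtain v where "v \<in> V" "of_int_vec v = of_int 1 *s p"
      by auto
    then show "p \<in> M"
      unfolding M_def using zero_less_one by blast
  qed
  ultimately show ?thesis
    using vec.span_minimal q unfolding M_def by blast
qed

lemma infinite_index_imp_span_ne_UNIV:
  fixes V :: "(int ^ 'n) set"
  assumes V: "add_subgroup V" and "infinite_index V"
  shows "vec.span (of_int_vec ` V :: (rat ^ 'n) set) \<noteq> UNIV"
proof
  assume span: "vec.span (of_int_vec ` V :: (rat ^ 'n) set) = UNIV"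
  have "\<exists>D>0. D *s axis i 1 \<in> V" for i
  proof -
    obtain D v where "D > 0" "v \<in> V"
      and "of_int_vec v = (of_int D *s of_int_vec (axis i 1) :: rat ^ 'n)"
      using span_of_int_vec_imp_int_multiple[OF V, of "of_int_vec (axis i 1)"] span by auto
    then have "v = D *s axis i 1"
      by (simp flip: of_int_vec_smult)
    with \<open>D > 0\<close> \<open>v \<in> V\<close> show ?thesis
      by blast
  qed
  then obtain D where "\<And>i. D i > 0" "\<And>i. D i *s axis i 1 \<in> V"
    by metis
  with finite_index_if_axis_multiples[OF V] \<open>infinite_index V\<close> show False
    by blast
qed

lemma rat_vec_int_multiple: "\<exists>D>0. \<exists>z. of_int_vec z = of_int D *s (q :: rat ^ 'n)"
proof -
  have "axis i 1 \<in> range (of_int_vec :: int ^ 'n \<Rightarrow> rat ^ 'n)" for i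
    using of_int_vec_axis[symmetric] by (rule range_eqI)
  then have "cart_basis \<subseteq> range (of_int_vec :: int ^ 'n \<Rightarrow> rat ^ 'n)"
    unfolding cart_basis_def by blast
  then have "q \<in> vec.span (range of_int_vec)"
    using vec.span_mono span_cart_basis by blast
  moreover have "add_subgroup (UNIV :: (int ^ 'n) set)"
    by (simp add: add_subgroup_def)
  ultimately show ?thesis
    using span_of_int_vec_imp_int_multiple by blast
qed

lemma ex_int_vec_not_in_finite_proper_subspaces:
  fixes \<S> :: "(rat ^ 'n) set set"
  assumes "finite \<S>" "\<And>S. S \<in> \<S> \<Longrightarrow> vec.subspace S" "\<And>S. S \<in> \<S> \<Longrightarrow> S \<noteq> UNIV"
  shows "\<exists>z. \<forall>S\<in>\<S>. of_int_vec z \<notin> S"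
proof -
  obtain q where q: "\<forall>S\<in>\<S>. q \<notin> S"
    using vec.ex_not_in_finite_proper_subspaces[OF infinite_UNIV_char_0 assms] by blast
  obtain D z where "D > 0" and z: "of_int_vec z = of_int D *s q"
    using rat_vec_int_multiple by blast
  have "of_int_vec z \<notin> S" if "S \<in> \<S>" for S
    using q that assms(2)[OF that] \<open>D > 0\<close> by (simp add: z vec.subspace_scale_iff)
  then show ?thesis
    by blast
qed

theorem lemma4p8:
  fixes V :: "nat \<Rightarrow> (int ^ 'k) set" and r :: nat
  assumes "\<And>j. j \<in> {1..r} \<Longrightarrow> add_subgroup (V j)"
    and "\<And>j. j \<in> {1..r} \<Longrightarrow> infinite_index (V j)"
  shows "\<exists>x :: int ^ 'k. \<forall>n :: int. n > 0 \<longrightarrow> n *s x \<notin> (\<Union>j\<in>{1..r}. V j)"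
proof -
  define S where "S j = vec.span (of_int_vec ` V j :: (rat ^ 'k) set)" for j
  have subspace: "vec.subspace (S j)" for j
    unfolding S_def by (rule vec.subspace_span)
  moreover have "S j \<noteq> UNIV" if "j \<in> {1..r}" for j
    unfolding S_def using infinite_index_imp_span_ne_UNIV assms that by blast
  ultimately obtain z where z: "\<forall>T\<in>S ` {1..r}. of_int_vec z \<notin> T"
    using ex_int_vec_not_in_finite_proper_subspaces[of "S ` {1..r}"] by blast
  have "n *s z \<notin> V j" if "n > 0" "j \<in> {1..r}" for n j
  proof
    assume "n *s z \<in> V j"
    then have "of_int_vec (n *s z) \<in> S j"
      unfolding S_def by (intro vec.span_base imageI)
    with \<open>n > 0\<close> have "of_int_vec z \<in> S j"
      by (simp add: of_int_vec_smult vec.subspace_scale_iff[OF subspace])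
    with z \<open>j \<in> {1..r}\<close> show False
      by blast
  qed
  then show ?thesis
    by blast
qed

end
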